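(* Let $\mathfrak{C}=(U,M,I,N,J)$ be a formal decision context, let $\mathfrak{R}_{I}(\mathfrak{C})$ be its set of I-decision rules, ordered by the rule implication relation $\Rightarrow$, and let $\overline{\mathfrak{R}}_{I}(\mathfrak{C})$ be its set of necessary I-decision rules. Then: (1) $(\mathfrak{R}_{I}(\mathfrak{C}),\Rightarrow)$ is a partially ordered set. That is: $r\Rightarrow r$ for every $r\in\mathfrak{R}_{I}(\mathfrak{C})$; $r_1\Rightarrow r_2$ and $r_2\Rightarrow r_1$ imply $r_1=r_2$; and $r_1\Rightarrow r_2$ and $r_2\Rightarrow r_3$ imply $r_1\Rightarrow r_3$. (2) $r\in\overline{\mathfrak{R}}_{I}(\mathfrak{C})$ if and only if, for every $r'\in\mathfrak{R}_{I}(\mathfrak{C})$, $r'\Rightarrow r$ implies $r'=r$. In other words, $r$ is a minimal element of $(\mathfrak{R}_{I}(\mathfrak{C}),\Rightarrow)$. (3) Suppose $O\in \mathrm{Ext}L_{O}(\mathfrak{C}_M)\cap \mathrm{Ext}L(\mathfrak{C}_N)$, $O\neq\emptyset$ and $O\neq U$. Then $(O,O^{\square_M})\in L_O(\mathfrak{C}_M)$, $(O,O^{\uparrow_N})\in L(\mathfrak{C}_N)$, and $(O,O^{\square_M})\rightarrow(O,O^{\uparrow_N})$ is a necessary I-decision rule.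
   Context: Formal context $(U,M,I)$: $U$ and $M$ are finite nonempty sets and $I\subseteq U\times M$. For $O\subseteq U$ and $C\subseteq M$ define: - $O^{\uparrow}=\{a\in M\mid \forall x\in O\,((x,a)\in I)\}$ and $C^{\downarrow}=\{x\in U\mid \forall a\in C\,((x,a)\in I)\}$; - $O^{\square}=\{a\in M\mid \forall x\in U\,((x,a)\in I\Rightarrow x\in O)\}$ and $C^{\lozenge}=\{x\in U\mid \exists a\in C\,((x,a)\in I)\}$. A formal concept is a pair $(O,C)$ with $O^\uparrow=C$ and $C^\downarrow=O$; the set of formal concepts is $L$. An object-oriented concept is a pair $(O,C)$ with $O^\square=C$ and $C^\lozenge=O$; the set of these is $L_O$. $\mathrm{Ext}$ denotes the set of first components (extents). Standing assumption: every formal context is canonical, i.e. for all $x\in U$ and $a\in M$ we have $\{x\}^\uparrow\ne\emptyset$, $\{x\}^\uparrow\ne M$, $\{a\}^\downarrow\ne\emptyset$ and $\{a\}^\downarrow\ne U$. A formal decision context $\mathfrak{C}=(U,M,I,N,J)$ consists of formal contexts $\mathfrak{C}_M=(U,M,I)$ (conditional) and $\mathfrak{C}_N=(U,N,J)$ (decision) with $M\cap N=\emptyset$. Operators computed in $\mathfrak{C}_M$ carry subscript $M$, and those computed in $\mathfrak{C}_N$ carry subscript $N$. An I-decision rule is $(O,C)\rightarrow(Y,D)$ with $(O,C)\in L_O(\mathfrak{C}_M)$, $(Y,D)\in L(\mathfrak{C}_N)$, $O\subseteq Y$, $O\ne\emptyset$ and $Y\ne U$. Implication between rules: $(O_1,C_1)\rightarrow(Y_1,D_1)\Rightarrow(O_2,C_2)\rightarrow(Y_2,D_2)$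 iff $O_2\subseteq O_1\subseteq Y_1\subseteq Y_2$. A rule $r$ is redundant if some rule $r_1\ne r$ in $\mathfrak{R}_I(\mathfrak{C})$ satisfies $r_1\Rightarrow r$; otherwise $r$ is necessary. *)

theory Defs
  imports Main
begin

definition up :: "'u set \<Rightarrow> 'a set \<Rightarrow> ('u \<times> 'a) set \<Rightarrow> 'u set \<Rightarrow> 'a set" where
  "up U M I X = {a \<in> M. \<forall>x \<in> X. (x, a) \<in> I}"

definition down :: "'u set \<Rightarrow> 'a set \<Rightarrow> ('u \<times> 'a) set \<Rightarrow> 'a set \<Rightarrow> 'u set" where
  "down U M I C = {x \<in> U. \<forall>a \<in> C. (x, a) \<in> I}"

definition box :: "'u set \<Rightarrow> 'a set \<Rightarrow> ('u \<times> 'a) set \<Rightarrow> 'u set \<Rightarrow> 'a set" where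
  "box U M I X = {a \<in> M. \<forall>x \<in> U. (x, a) \<in> I \<longrightarrow> x \<in> X}"

definition dia :: "'u set \<Rightarrow> 'a set \<Rightarrow> ('u \<times> 'a) set \<Rightarrow> 'a set \<Rightarrow> 'u set" where
  "dia U M I C = {x \<in> U. \<exists>a \<in> C. (x, a) \<in> I}"

definition concepts :: "'u set \<Rightarrow> 'a set \<Rightarrow> ('u \<times> 'a) set \<Rightarrow> ('u set \<times> 'a set) set" where
  "concepts U M I = {(X, C). X \<subseteq> U \<and> C \<subseteq> M \<and> up U M I X = C \<and> down U M I C = X}"

definition oo_concepts :: "'u set \<Rightarrow> 'a set \<Rightarrow> ('u \<times> 'a) set \<Rightarrow> ('u set \<times> 'a set) set" where
  "oo_concepts U M I = {(X, C). X \<subseteq> U \<and> C \<subseteq> M \<and> box U M I X = C \<and> dia U M I C = X}"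

definition formal_context :: "'u set \<Rightarrow> 'a set \<Rightarrow> ('u \<times> 'a) set \<Rightarrow> bool" where
  "formal_context U M I \<longleftrightarrow> finite U \<and> finite M \<and> U \<noteq> {} \<and> M \<noteq> {} \<and> I \<subseteq> U \<times> M"

definition canonical :: "'u set \<Rightarrow> 'a set \<Rightarrow> ('u \<times> 'a) set \<Rightarrow> bool" where
  "canonical U M I \<longleftrightarrow>
     (\<forall>x \<in> U. up U M I {x} \<noteq> {} \<and> up U M I {x} \<noteq> M) \<and>
     (\<forall>a \<in> M. down U M I {a} \<noteq> {} \<and> down U M I {a} \<noteq> U)"

definition decision_context ::
  "'u set \<Rightarrow> 'a set \<Rightarrow> ('u \<times> 'a) set \<Rightarrow> 'a set \<Rightarrow> ('u \<times> 'a) set \<Rightarrow> bool" where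
  "decision_context U M I N J \<longleftrightarrow>
     formal_context U M I \<and> formal_context U N J \<and>
     canonical U M I \<and> canonical U N J \<and> M \<inter> N = {}"

type_synonym ('u, 'a) drule = "('u set \<times> 'a set) \<times> ('u set \<times> 'a set)"

definition I_rules ::
  "'u set \<Rightarrow> 'a set \<Rightarrow> ('u \<times> 'a) set \<Rightarrow> 'a set \<Rightarrow> ('u \<times> 'a) set \<Rightarrow> ('u, 'a) drule set" where
  "I_rules U M I N J = {((X, C), (Y, D)).
      (X, C) \<in> oo_concepts U M I \<and> (Y, D) \<in> concepts U N J \<and> X \<subseteq> Y \<and> X \<noteq> {} \<and> Y \<noteq> U}"

definition rule_implies :: "('u, 'a) drule \<Rightarrow> ('u, 'a) drule \<Rightarrow> bool" where
  "rule_implies r1 r2 \<longleftrightarrow>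
     (let X1 = fst (fst r1); Y1 = fst (snd r1); X2 = fst (fst r2); Y2 = fst (snd r2)
      in X2 \<subseteq> X1 \<and> X1 \<subseteq> Y1 \<and> Y1 \<subseteq> Y2)"

definition necessary_rules ::
  "'u set \<Rightarrow> 'a set \<Rightarrow> ('u \<times> 'a) set \<Rightarrow> 'a set \<Rightarrow> ('u \<times> 'a) set \<Rightarrow> ('u, 'a) drule set" where
  "necessary_rules U M I N J = {r \<in> I_rules U M I N J.
      \<not> (\<exists>r1 \<in> I_rules U M I N J. r1 \<noteq> r \<and> rule_implies r1 r)}"

end

theory Submission
  imports Defs
begin

text \<open>A concept of either kind is determined by its extent, so an I-decision rule is determined
  by the pair of extents (O, Y), and rule implication is the order
  O2 \<subseteq> O1 \<subseteq> Y1 \<subseteq> Y2 on such pairs restricted to pairs with O \<subseteq> Y.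
  A rule whose two extents coincide is squeezed: any rule implying it has
  O \<subseteq> O' \<subseteq> Y' \<subseteq> O, so it is the rule itself.\<close>

lemma rule_implies_iff:
  "rule_implies ((X\<^sub>1, C\<^sub>1), (Y\<^sub>1, D\<^sub>1)) ((X\<^sub>2, C\<^sub>2), (Y\<^sub>2, D\<^sub>2)) \<longleftrightarrow>
     X\<^sub>2 \<subseteq> X\<^sub>1 \<and> X\<^sub>1 \<subseteq> Y\<^sub>1 \<and> Y\<^sub>1 \<subseteq> Y\<^sub>2"
  by (simp add: rule_implies_def)

lemma concepts_intent: "(X, C) \<in> concepts U M I \<Longrightarrow> C = up U M I X"
  by (simp add: concepts_def)

lemma oo_concepts_intent: "(X, C) \<in> oo_concepts U M I \<Longrightarrow> C = box U M I X"
  by (simp add: oo_concepts_def)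

lemma concepts_extent_pair: "X \<in> fst ` concepts U M I \<Longrightarrow> (X, up U M I X) \<in> concepts U M I"
  by (auto simp: concepts_def)

lemma oo_concepts_extent_pair:
  "X \<in> fst ` oo_concepts U M I \<Longrightarrow> (X, box U M I X) \<in> oo_concepts U M I"
  by (auto simp: oo_concepts_def)

lemma I_rules_eqI:
  assumes "((X, C), (Y, D)) \<in> I_rules U M I N J" and "((X, C'), (Y, D')) \<in> I_rules U M I N J"
  shows "C = C'" and "D = D'"
  using assms by (auto simp: I_rules_def dest: concepts_intent oo_concepts_intent)

lemma rule_implies_refl: "r \<in> I_rules U M I N J \<Longrightarrow> rule_implies r r"
  by (auto simp: I_rules_def rule_implies_iff)

lemma rule_implies_antisym:
  assumes "r\<^sub>1 \<in> I_rules U M I N J" "r\<^sub>2 \<in> I_rules U M I N J"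
    and "rule_implies r\<^sub>1 r\<^sub>2" "rule_implies r\<^sub>2 r\<^sub>1"
  shows "r\<^sub>1 = r\<^sub>2"
proof -
  obtain X\<^sub>1 C\<^sub>1 Y\<^sub>1 D\<^sub>1 X\<^sub>2 C\<^sub>2 Y\<^sub>2 D\<^sub>2
    where r: "r\<^sub>1 = ((X\<^sub>1, C\<^sub>1), (Y\<^sub>1, D\<^sub>1))" "r\<^sub>2 = ((X\<^sub>2, C\<^sub>2), (Y\<^sub>2, D\<^sub>2))"
    by (metis prod.collapse)
  with assms(3,4) have "X\<^sub>1 = X\<^sub>2" "Y\<^sub>1 = Y\<^sub>2"
    by (auto simp: rule_implies_iff)
  with assms(1,2) r show ?thesis
    using I_rules_eqI by metis
qed

lemma rule_implies_trans: "rule_implies r\<^sub>1 r\<^sub>2 \<Longrightarrow> rule_implies r\<^sub>2 r\<^sub>3 \<Longrightarrow> rule_implies r\<^sub>1 r\<^sub>3"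
  by (auto simp: rule_implies_def Let_def)

lemma necessary_rules_iff_minimal:
  "r \<in> I_rules U M I N J \<Longrightarrow>
     r \<in> necessary_rules U M I N J \<longleftrightarrow> (\<forall>r' \<in> I_rules U M I N J. rule_implies r' r \<longrightarrow> r' = r)"
  by (auto simp: necessary_rules_def)

lemma same_extent_rule_necessary:
  assumes r: "((X, C), (X, D)) \<in> I_rules U M I N J"
  shows "((X, C), (X, D)) \<in> necessary_rules U M I N J"
  unfolding necessary_rules_iff_minimal[OF r]
proof (intro ballI impI)
  fix r' assume r': "r' \<in> I_rules U M I N J" and imp: "rule_implies r' ((X, C), (X, D))"
  obtain X' C' Y' D' where r'_eq: "r' = ((X', C'), (Y', D'))"
    by (metis prod.collapse)
  with imp have "X' = X" "Y' = X"
    by (auto simp: rule_implies_iff)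
  with r r' r'_eq show "r' = ((X, C), (X, D))"
    using I_rules_eqI by metis
qed

theorem theorem3p4:
  fixes U :: "'u set" and M N :: "'a set" and I J :: "('u \<times> 'a) set"
  assumes "decision_context U M I N J"
  shows "(\<forall>r \<in> I_rules U M I N J. rule_implies r r)
       \<and> (\<forall>r1 \<in> I_rules U M I N J. \<forall>r2 \<in> I_rules U M I N J.
            rule_implies r1 r2 \<and> rule_implies r2 r1 \<longrightarrow> r1 = r2)
       \<and> (\<forall>r1 \<in> I_rules U M I N J. \<forall>r2 \<in> I_rules U M I N J. \<forall>r3 \<in> I_rules U M I N J.
            rule_implies r1 r2 \<and> rule_implies r2 r3 \<longrightarrow> rule_implies r1 r3)
       \<and> (\<forall>r \<in> I_rules U M I N J.
            r \<in> necessary_rules U M I N J \<longleftrightarrow>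
            (\<forall>r' \<in> I_rules U M I N J. rule_implies r' r \<longrightarrow> r' = r))
       \<and> (\<forall>X. X \<in> fst ` oo_concepts U M I \<inter> fst ` concepts U N J \<and> X \<noteq> {} \<and> X \<noteq> U \<longrightarrow>
            (X, box U M I X) \<in> oo_concepts U M I \<and>
            (X, up U N J X) \<in> concepts U N J \<and>
            ((X, box U M I X), (X, up U N J X)) \<in> necessary_rules U M I N J)"
proof (intro conjI allI ballI impI)
  fix X assume X: "X \<in> fst ` oo_concepts U M I \<inter> fst ` concepts U N J \<and> X \<noteq> {} \<and> X \<noteq> U"
  show oo: "(X, box U M I X) \<in> oo_concepts U M I"
    using X by (blast intro: oo_concepts_extent_pair)
  show fc: "(X, up U N J X) \<in> concepts U N J"
    using X by (blast intro: concepts_extent_pair)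
  show "((X, box U M I X), (X, up U N J X)) \<in> necessary_rules U M I N J"
    using oo fc X by (auto simp: I_rules_def intro: same_extent_rule_necessary)
qed (meson rule_implies_refl rule_implies_antisym rule_implies_trans
      necessary_rules_iff_minimal)+

end
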